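(* Let $G$ be a graph whose twin graph $G^*$ is isomorphic to a triangle with one pendant edge attached (so $G^*$ has two vertices of degree 2, one of degree 3 and one leaf), where one of the degree-2 vertices is of type (N), the other degree-2 vertex is of type (1K), the leaf is of type (1N), and moreover, if the degree-2 vertex of type (1K) is of type (K), then neither the leaf nor the degree-3 vertex is of type (N). Then $D(G)\neq n(G)-2$.
   Context: All graphs are finite and simple; $n(G)=|V(G)|$; $N_G(u)$ is the neighborhood of $u$. A distinguishing coloring of a graph $G$ is a (not necessarily proper) vertex coloring such that the only automorphism of $G$ mapping every vertex to a vertex of the same color is the identity; the distinguishing number $D(G)$ is the minimum number of colors in a distinguishing coloring of $G$. Two distinct vertices $u,v$ are twins if $N_G(u)\setminus\{v\}=N_G(v)\setminus\{u\}$. The relation $u\equiv v$ iff $u=v$ or $u,v$ are twins is an equivalence relation; the class of $v$ is denoted $v^*$. The twin graph $G^*$ has the equivalence classes as vertices, distinct classes $u^*,v^*$ being adjacent iff $uv\in E(G)$. Each class induces a complete or an edgeless graph. A class $v^*$ is of type (1) if $|v^*|=1$, of type (K) if $|v^*|\ge 2$ and it induces a complete graph, and of type (N) if $|v^*|\ge2$ and it induces an edgeless graph; type (1K) means type (1) or (K), type (1N) means (1) or (N), and type (KN) means (K) or (N). *)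

theory Defs
  imports Main
begin

definition graph :: "'a set \<Rightarrow> ('a \<Rightarrow> 'a \<Rightarrow> bool) \<Rightarrow> bool" where
  "graph V E \<longleftrightarrow> finite V \<and> (\<forall>u v. E u v \<longrightarrow> u \<in> V \<and> v \<in> V \<and> u \<noteq> v \<and> E v u)"

definition nbhd :: "'a set \<Rightarrow> ('a \<Rightarrow> 'a \<Rightarrow> bool) \<Rightarrow> 'a \<Rightarrow> 'a set" where
  "nbhd V E u = {v \<in> V. E u v}"

definition automorphism :: "'a set \<Rightarrow> ('a \<Rightarrow> 'a \<Rightarrow> bool) \<Rightarrow> ('a \<Rightarrow> 'a) \<Rightarrow> bool" where
  "automorphism V E f \<longleftrightarrow> bij_betw f V V \<and> (\<forall>u\<in>V. \<forall>v\<in>V. E (f u) (f v) \<longleftrightarrow> E u v)"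

definition distinguishing :: "'a set \<Rightarrow> ('a \<Rightarrow> 'a \<Rightarrow> bool) \<Rightarrow> ('a \<Rightarrow> nat) \<Rightarrow> bool" where
  "distinguishing V E c \<longleftrightarrow>
     (\<forall>f. automorphism V E f \<and> (\<forall>v\<in>V. c (f v) = c v) \<longrightarrow> (\<forall>v\<in>V. f v = v))"

definition dist_num :: "'a set \<Rightarrow> ('a \<Rightarrow> 'a \<Rightarrow> bool) \<Rightarrow> nat" where
  "dist_num V E = (LEAST k. \<exists>c. c ` V \<subseteq> {..<k} \<and> distinguishing V E c)"

definition twins :: "'a set \<Rightarrow> ('a \<Rightarrow> 'a \<Rightarrow> bool) \<Rightarrow> 'a \<Rightarrow> 'a \<Rightarrow> bool" where
  "twins V E u v \<longleftrightarrow> u \<noteq> v \<and> nbhd V E u - {v} = nbhd V E v - {u}"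

definition twin_class :: "'a set \<Rightarrow> ('a \<Rightarrow> 'a \<Rightarrow> bool) \<Rightarrow> 'a \<Rightarrow> 'a set" where
  "twin_class V E v = {u \<in> V. u = v \<or> twins V E u v}"

text \<open>Twin graph G*: vertices are the twin classes, distinct classes adjacent iff
some (equivalently every) pair of representatives is adjacent.\<close>
definition twin_vertices :: "'a set \<Rightarrow> ('a \<Rightarrow> 'a \<Rightarrow> bool) \<Rightarrow> 'a set set" where
  "twin_vertices V E = twin_class V E ` V"

definition twin_adj :: "'a set \<Rightarrow> ('a \<Rightarrow> 'a \<Rightarrow> bool) \<Rightarrow> 'a set \<Rightarrow> 'a set \<Rightarrow> bool" where
  "twin_adj V E X Y \<longleftrightarrow> X \<noteq> Y \<and> (\<exists>u\<in>X. \<exists>v\<in>Y. E u v)"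

definition type_1 :: "'a set \<Rightarrow> bool" where
  "type_1 X \<longleftrightarrow> card X = 1"

definition type_K :: "('a \<Rightarrow> 'a \<Rightarrow> bool) \<Rightarrow> 'a set \<Rightarrow> bool" where
  "type_K E X \<longleftrightarrow> card X \<ge> 2 \<and> (\<forall>u\<in>X. \<forall>v\<in>X. u \<noteq> v \<longrightarrow> E u v)"

definition type_N :: "('a \<Rightarrow> 'a \<Rightarrow> bool) \<Rightarrow> 'a set \<Rightarrow> bool" where
  "type_N E X \<longleftrightarrow> card X \<ge> 2 \<and> (\<forall>u\<in>X. \<forall>v\<in>X. \<not> E u v)"

text \<open>G* is isomorphic to the paw (triangle A B C with pendant edge C L):
A, B the degree-2 vertices, C the degree-3 vertex, L the leaf.\<close>
definition twin_graph_paw :: "'a set \<Rightarrow> ('a \<Rightarrow> 'a \<Rightarrow> bool) \<Rightarrow> 'a set \<Rightarrow> 'a set \<Rightarrow> 'a set \<Rightarrow> 'a set \<Rightarrow> bool" where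
  "twin_graph_paw V E A B C L \<longleftrightarrow>
     twin_vertices V E = {A, B, C, L} \<and>
     A \<noteq> B \<and> A \<noteq> C \<and> A \<noteq> L \<and> B \<noteq> C \<and> B \<noteq> L \<and> C \<noteq> L \<and>
     twin_adj V E A B \<and> twin_adj V E A C \<and> twin_adj V E B C \<and> twin_adj V E C L \<and>
     \<not> twin_adj V E A L \<and> \<not> twin_adj V E B L"

end

theory Submission
  imports Defs
begin

text \<open>Pick two vertices \<open>a\<^sub>1, a\<^sub>2\<close> of the class A of type (N) and representatives b, c, l of
B, C, L. Every automorphism fixing all vertices outside \<open>S = {a\<^sub>1, b, c, l}\<close>, in particular
\<open>a\<^sub>2\<close>, is the identity: it permutes S, preserves the neighbours \<open>{b, c}\<close> of \<open>a\<^sub>2\<close> in S,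
cannot swap \<open>a\<^sub>1\<close> with l because l is not adjacent to b, and then cannot swap b with c
because l is adjacent to c only. Giving S one colour and every other vertex its own colour
is therefore distinguishing, so \<open>D(G) \<le> n(G) - 3\<close>. Only the type of A matters.\<close>

lemma graph_adjD:
  assumes "graph V E" and "E u v"
  shows "E v u \<and> u \<noteq> v \<and> u \<in> V \<and> v \<in> V"
  using assms unfolding graph_def by blast

lemma twins_iff:
  assumes "graph V E"
  shows "twins V E u v \<longleftrightarrow> u \<noteq> v \<and> (\<forall>z. z \<noteq> u \<and> z \<noteq> v \<longrightarrow> (E u z \<longleftrightarrow> E v z))"
  unfolding twins_def nbhd_def set_eq_iff by (auto dest: graph_adjD[OF assms])

lemma twins_trans:
  assumes g: "graph V E" and "twins V E u v" and "twins V E v w" and "u \<noteq> w"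
  shows "twins V E u w"
proof -
  have uv: "u \<noteq> v" "\<And>z. z \<noteq> u \<Longrightarrow> z \<noteq> v \<Longrightarrow> E u z \<longleftrightarrow> E v z"
   and vw: "v \<noteq> w" "\<And>z. z \<noteq> v \<Longrightarrow> z \<noteq> w \<Longrightarrow> E v z \<longleftrightarrow> E w z"
    using assms twins_iff[OF g] by blast+
  have "E u v \<longleftrightarrow> E w v"
    using uv(2)[of w] vw(2)[of u] uv(1) vw(1) \<open>u \<noteq> w\<close> graph_adjD[OF g] by blast
  then have "E u z \<longleftrightarrow> E w z" if "z \<noteq> u" "z \<noteq> w" for z
    using that uv(2)[of z] vw(2)[of z] by (cases "z = v") auto
  then show ?thesis using \<open>u \<noteq> w\<close> twins_iff[OF g] by blast
qed

lemma twin_class_eq: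
  assumes g: "graph V E" and "u \<in> twin_class V E x"
  shows "twin_class V E u = twin_class V E x"
proof -
  have sym: "twins V E v w \<Longrightarrow> twins V E w v" for v w
    unfolding twins_def by auto
  show ?thesis
    using assms sym twins_trans[OF g] unfolding twin_class_def by blast
qed

lemma twin_vertices_disjoint:
  assumes "graph V E" and "X \<in> twin_vertices V E" and "Y \<in> twin_vertices V E" and "X \<noteq> Y"
  shows "X \<inter> Y = {}"
proof -
  obtain x y where "X = twin_class V E x" "Y = twin_class V E y"
    using assms unfolding twin_vertices_def by blast
  then show ?thesis
    using twin_class_eq[OF \<open>graph V E\<close>] \<open>X \<noteq> Y\<close> by blast
qed

lemma twin_class_adj_cong:
  assumes g: "graph V E" and X: "X \<in> twin_vertices V E"
    and "u \<in> X" and "u' \<in> X" and "v \<notin> X"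
  shows "E u v \<longleftrightarrow> E u' v"
proof -
  obtain x where "x \<in> V" and x: "X = twin_class V E x" using X unfolding twin_vertices_def by blast
  have "x \<noteq> v" using assms x \<open>x \<in> V\<close> unfolding twin_class_def by auto
  have to_rep: "E w v \<longleftrightarrow> E x v" if "w \<in> X" for w
  proof -
    have "w = x \<or> twins V E w x" using that x unfolding twin_class_def by blast
    moreover have "w \<noteq> v" using that \<open>v \<notin> X\<close> by blast
    ultimately show ?thesis using \<open>x \<noteq> v\<close> twins_iff[OF g, of w x] by auto
  qed
  show ?thesis using to_rep \<open>u \<in> X\<close> \<open>u' \<in> X\<close> by blast
qed

lemma twin_adj_edge:
  assumes g: "graph V E" and X: "X \<in> twin_vertices V E" and Y: "Y \<in> twin_vertices V E"
    and "twin_adj V E X Y" and u: "u \<in> X" and v: "v \<in> Y"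
  shows "E u v"
proof -
  obtain u' v' where u': "u' \<in> X" and v': "v' \<in> Y" and "E u' v'" and "X \<noteq> Y"
    using \<open>twin_adj V E X Y\<close> unfolding twin_adj_def by blast
  have disj: "X \<inter> Y = {}" using twin_vertices_disjoint[OF g X Y \<open>X \<noteq> Y\<close>] .
  have "E u v'" using twin_class_adj_cong[OF g X u u'] v' disj \<open>E u' v'\<close> by blast
  then have "E v' u" using graph_adjD[OF g] by blast
  then have "E v u" using twin_class_adj_cong[OF g Y v v'] u disj by blast
  then show ?thesis using graph_adjD[OF g] by blast
qed

lemma type_N_nonadjacent_pair:
  assumes "type_N E X"
  obtains a1 a2 where "a1 \<in> X" "a2 \<in> X" "a1 \<noteq> a2" "\<not> E a1 a2"
proof -
  have "2 \<le> card X" and no_edges: "\<forall>u\<in>X. \<forall>v\<in>X. \<not> E u v"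
    using assms unfolding type_N_def by blast+
  then have "finite X" and "\<not> card X \<le> Suc 0" by (auto intro: card_ge_0_finite)
  then have "\<exists>a1\<in>X. \<exists>a2\<in>X. a1 \<noteq> a2" by (simp add: card_le_Suc0_iff_eq)
  then show ?thesis using no_edges that by blast
qed

lemma twin_adj_sym:
  assumes "graph V E" and "twin_adj V E X Y"
  shows "twin_adj V E Y X"
  using assms graph_adjD unfolding twin_adj_def by metis

definition determining :: "'a set \<Rightarrow> ('a \<Rightarrow> 'a \<Rightarrow> bool) \<Rightarrow> 'a set \<Rightarrow> bool" where
  "determining V E F \<longleftrightarrow> (\<forall>f. automorphism V E f \<and> (\<forall>v\<in>F. f v = v) \<longrightarrow> (\<forall>v\<in>V. f v = v))"

lemma dist_num_le_Suc_card_determining: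
  assumes "determining V E F" and "F \<subseteq> V" and "finite F"
  shows "dist_num V E \<le> card F + 1"
proof -
  obtain h where h: "bij_betw h F {..<card F}"
    using ex_bij_betw_finite_nat[OF \<open>finite F\<close>] atLeast0LessThan by auto
  define col where "col v = (if v \<in> F then Suc (h v) else 0)" for v
  have range: "col ` V \<subseteq> {..<card F + 1}"
    using bij_betw_apply[OF h] unfolding col_def by auto
  have "distinguishing V E col"
    unfolding distinguishing_def
  proof (intro allI impI)
    fix f assume f: "automorphism V E f \<and> (\<forall>v\<in>V. col (f v) = col v)"
    have "f v = v" if "v \<in> F" for v
    proof -
      have "col (f v) = col v" using f that \<open>F \<subseteq> V\<close> by blast
      also have "\<dots> = Suc (h v)" using that by (simp add: col_def)
      finally have col_fv: "col (f v) = Suc (h v)" .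
      then have "f v \<in> F" by (auto simp: col_def split: if_splits)
      moreover have "h (f v) = h v" using col_fv \<open>f v \<in> F\<close> by (simp add: col_def)
      ultimately show "f v = v" using h that unfolding bij_betw_def inj_on_def by blast
    qed
    then show "\<forall>v\<in>V. f v = v" using f \<open>determining V E F\<close> unfolding determining_def by blast
  qed
  then show ?thesis
    unfolding dist_num_def using range by (intro Least_le) blast
qed

lemma automorphism_fixing_outside_maps_into:
  assumes "automorphism V E f" and "\<forall>v\<in>V - S. f v = v" and "v \<in> V" and "v \<in> S"
  shows "f v \<in> S"
proof (rule ccontr)
  assume "f v \<notin> S"
  have "bij_betw f V V" using assms(1) unfolding automorphism_def by blast
  then have "f v \<in> V" "inj_on f V" using \<open>v \<in> V\<close> bij_betw_apply bij_betw_imp_inj_on by metis+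
  then have "f (f v) = f v" using assms(2) \<open>f v \<notin> S\<close> by blast
  then have "f v = v" using \<open>inj_on f V\<close> \<open>f v \<in> V\<close> \<open>v \<in> V\<close> inj_on_def by metis
  then show False using \<open>f v \<notin> S\<close> \<open>v \<in> S\<close> by simp
qed

locale paw_twin_config =
  fixes V :: "'a set" and E :: "'a \<Rightarrow> 'a \<Rightarrow> bool" and a1 a2 b c l :: 'a
  assumes graph: "graph V E"
    and a1_a2: "a1 \<noteq> a2" "\<not> E a1 a2"
    and edges: "E a1 b" "E a2 b" "E a1 c" "E a2 c" "E l c"
    and non_edges: "\<not> E a1 l" "\<not> E a2 l" "\<not> E l b"
begin

lemma in_V: "a1 \<in> V" "a2 \<in> V" "b \<in> V" "c \<in> V" "l \<in> V"
  using graph_adjD[OF graph] edges by blast+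

lemma distinct: "distinct [a1, a2, b, c, l]"
  using a1_a2 edges non_edges by (auto dest: graph_adjD[OF graph])

lemma automorphism_fixes:
  assumes f: "automorphism V E f" and fa2: "f a2 = a2"
    and maps: "f ` {a1, b, c, l} \<subseteq> {a1, b, c, l}"
  shows "f a1 = a1" "f b = b" "f c = c" "f l = l"
proof -
  have adj: "E (f u) (f v) \<longleftrightarrow> E u v" if "u \<in> V" "v \<in> V" for u v
    using f that unfolding automorphism_def by blast
  have inj: "inj_on f V" using f unfolding automorphism_def bij_betw_def by blast
  have inj_S: "inj_on f {a1, b, c, l}" using inj_on_subset[OF inj] in_V by auto
  then have perm: "f ` {a1, b, c, l} = {a1, b, c, l}"
    using endo_inj_surj[OF _ maps inj_S] by simp
  have "E a2 (f b)" "E a2 (f c)" using adj[of a2 b] adj[of a2 c] fa2 edges in_V by auto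
  moreover have "\<not> E a2 a1" "\<not> E a2 l" using graph_adjD[OF graph] a1_a2 non_edges by blast+
  ultimately have fbc: "f b \<in> {b, c}" "f c \<in> {b, c}"
    using maps by auto
  have "f b \<noteq> f c" using inj_S distinct by (auto simp: inj_on_def)
  then have "{f b, f c} = {b, c}" using fbc by auto
  then have fal: "f a1 \<in> {a1, l}" "f l \<in> {a1, l}"
    using perm inj_S distinct by (auto simp: inj_on_def)
  show fa1: "f a1 = a1"
  proof (rule ccontr)
    assume "f a1 \<noteq> a1"
    then have "E l (f b)" "E l (f c)" using fal adj[of a1 b] adj[of a1 c] edges in_V by auto
    then show False using fbc \<open>f b \<noteq> f c\<close> non_edges by auto
  qed
  show fl: "f l = l" using fal fa1 inj_S distinct by (auto simp: inj_on_def)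
  have "E l (f c)" using adj[of l c] fl edges in_V by auto
  then show fc: "f c = c" using fbc non_edges by auto
  show "f b = b" using fbc \<open>f b \<noteq> f c\<close> fc by auto
qed

lemma determining: "determining V E (V - {a1, b, c, l})"
  unfolding determining_def
proof (intro allI impI)
  fix f assume f: "automorphism V E f \<and> (\<forall>v\<in>V - {a1, b, c, l}. f v = v)"
  have "f a2 = a2" using f in_V distinct by auto
  moreover have "f ` {a1, b, c, l} \<subseteq> {a1, b, c, l}"
    using automorphism_fixing_outside_maps_into[of V E f] f in_V by blast
  ultimately show "\<forall>v\<in>V. f v = v"
    using automorphism_fixes f by blast
qed

lemma dist_num_le: "dist_num V E + 3 \<le> card V"
proof -
  have fin: "finite V" using graph unfolding graph_def by blast
  have "card {a1, b, c, l} = 4" using distinct by auto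
  then have card_F: "card (V - {a1, b, c, l}) = card V - 4"
    using in_V by (simp add: card_Diff_subset)
  have "card {a1, a2, b, c, l} \<le> card V" using in_V fin by (intro card_mono) auto
  then have "card V \<ge> 5" using distinct by simp
  moreover have "dist_num V E \<le> card (V - {a1, b, c, l}) + 1"
    using determining fin by (intro dist_num_le_Suc_card_determining) auto
  ultimately show ?thesis using card_F by linarith
qed

end

theorem lemma4p7:
  fixes V :: "'a set" and E :: "'a \<Rightarrow> 'a \<Rightarrow> bool" and A B C L :: "'a set"
  assumes "graph V E"
    and "twin_graph_paw V E A B C L"
    and "type_N E A"
    and "type_1 B \<or> type_K E B"
    and "type_1 L \<or> type_N E L"
    and "type_K E B \<longrightarrow> \<not> type_N E L \<and> \<not> type_N E C"
  shows "dist_num V E \<noteq> card V - 2"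
proof -
  note g = assms(1)
  have classes: "A \<in> twin_vertices V E" "B \<in> twin_vertices V E"
      "C \<in> twin_vertices V E" "L \<in> twin_vertices V E"
    and adj: "twin_adj V E A B" "twin_adj V E A C" "twin_adj V E C L"
    and non_adj: "\<not> twin_adj V E A L" "\<not> twin_adj V E B L" "A \<noteq> L" "B \<noteq> L"
    using assms(2) unfolding twin_graph_paw_def by auto
  obtain a1 a2 where "a1 \<in> A" "a2 \<in> A" "a1 \<noteq> a2" "\<not> E a1 a2"
    using type_N_nonadjacent_pair[OF \<open>type_N E A\<close>] by blast
  obtain b c l where "b \<in> B" "c \<in> C" "l \<in> L"
    using classes unfolding twin_vertices_def twin_class_def by blast
  have "paw_twin_config V E a1 a2 b c l"
  proof
    show "graph V E" "a1 \<noteq> a2" "\<not> E a1 a2" by fact+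
    show "E a1 b" "E a2 b" "E a1 c" "E a2 c" "E l c"
      using twin_adj_edge[OF g] twin_adj_sym[OF g adj(3)] classes adj
        \<open>a1 \<in> A\<close> \<open>a2 \<in> A\<close> \<open>b \<in> B\<close> \<open>c \<in> C\<close> \<open>l \<in> L\<close> by blast+
    show "\<not> E a1 l" "\<not> E a2 l" "\<not> E l b"
      using non_adj graph_adjD[OF g, of l b] \<open>a1 \<in> A\<close> \<open>a2 \<in> A\<close> \<open>b \<in> B\<close> \<open>l \<in> L\<close>
      unfolding twin_adj_def by blast+
  qed
  then have "dist_num V E + 3 \<le> card V" by (rule paw_twin_config.dist_num_le)
  then show ?thesis by linarith
qed

end
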